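(* Consider binary node classification with classes $\{0,1\}$, let $k\in\{0,1\}$, and let $c_0,c_1\in(0,1)$ be the class homophily parameters. Assume the classes are balanced ($P(\hat{Y}=0)=P(\hat{Y}=1)$), the graph is heterophilic ($c_k<1-c_{1-k}$), and $0<c_k<0.5$. If two nodes $n$ and $m$ have degrees $d_n>d_m$ and $|\mathcal{N}_k(n)| = |\mathcal{N}_k(m)|$ (so that $|\mathcal{N}_{1-k}(n)| > |\mathcal{N}_{1-k}(m)|$), then $$P\big(\hat{Y}_{n} = k \mid \{Y_j\}_{j\in\mathcal{N}(n)}\big) > P\big(\hat{Y}_{m} = k \mid \{Y_j\}_{j\in\mathcal{N}(m)}\big).$$
   Context: Model: each node $i$ has a (latent/soft) class $\hat{Y}_i\in\{0,1\}$, and each neighbor $j\in\mathcal{N}(i)$ has an observed label $Y_j\in\{0,1\}$. Given $\hat{Y}_i$, the neighbor labels are conditionally independent with $P(Y_j=k\mid \hat{Y}_i=k)=c_k$ and $P(Y_j=1-k\mid\hat{Y}_i=k)=1-c_k$ for $k\in\{0,1\}$ ($c_k$ is the class homophily of class $k$). The posterior is obtained by Bayes' rule: $P(\hat Y_i=k\mid\{Y_j=y_j\}_{j\in\mathcal N(i)})\propto P(\hat Y_i=k)\prod_{j\in\mathcal N(i)}P(Y_j=y_j\mid \hat Y_i=k)$, conditioning on the observed neighbor labels. Notation: $\mathcal{N}_k(i)=\{j\in\mathcal{N}(i): y_j=k\}$, $\mathcal{N}_{1-k}(i)=\{j\in\mathcal{N}(i): y_j=1-k\}$, and the degree of $i$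 is $d_i=|\mathcal N(i)|=|\mathcal{N}_k(i)|+|\mathcal{N}_{1-k}(i)|$. *)

theory Defs
  imports Complex_Main
begin

text \<open>Classes are the naturals 0 and 1. c k is the class homophily of class k.\<close>
definition nbr_lik :: "(nat \<Rightarrow> real) \<Rightarrow> nat \<Rightarrow> nat \<Rightarrow> real" where
  "nbr_lik c k yj = (if yj = k then c k else 1 - c k)"

text \<open>Posterior P(hatY_i = k | {Y_j = y j}_{j in N i}) by Bayes' rule, with prior p,
  conditionally independent neighbour labels, normalised over the classes 0 and 1.\<close>
definition posterior ::
  "(nat \<Rightarrow> real) \<Rightarrow> (nat \<Rightarrow> real) \<Rightarrow> ('v \<Rightarrow> 'v set) \<Rightarrow> ('v \<Rightarrow> nat) \<Rightarrow> 'v \<Rightarrow> nat \<Rightarrow> real" where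
  "posterior p c N y i k =
     p k * (\<Prod>j\<in>N i. nbr_lik c k (y j)) /
     (\<Sum>l\<in>{0,1}. p l * (\<Prod>j\<in>N i. nbr_lik c l (y j)))"

definition nbrs_with :: "('v \<Rightarrow> 'v set) \<Rightarrow> ('v \<Rightarrow> nat) \<Rightarrow> 'v \<Rightarrow> nat \<Rightarrow> 'v set" where
  "nbrs_with N y i k = {j \<in> N i. y j = k}"

end

theory Submission
  imports Defs
begin

text \<open>With binary labels the likelihood of a neighbourhood under class k only depends on the
  counts a = |N_k(i)| and b = |N_{1-k}(i)|, and for a balanced prior the posterior of k is
  A / (A + B) with A = c_k^a (1 - c_k)^b and B = (1 - c_{1-k})^a c_{1-k}^b. For fixed a, the
  ratio B / A is a constant times (c_{1-k} / (1 - c_k))^b, and heterophily says exactly that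
  this base is below 1; so the posterior strictly increases with b, i.e. with the degree.\<close>

lemma card_nbrs_with_add_complement:
  assumes "finite (N i)" and "\<forall>j \<in> N i. y j \<in> {0, 1}" and "k \<in> {0, 1}"
  shows "card (nbrs_with N y i k) + card (nbrs_with N y i (1 - k)) = card (N i)"
proof -
  have "N i = nbrs_with N y i k \<union> nbrs_with N y i (1 - k)"
    using assms(2,3) by (auto simp: nbrs_with_def)
  moreover have "nbrs_with N y i k \<inter> nbrs_with N y i (1 - k) = {}"
    using assms(3) by (auto simp: nbrs_with_def)
  moreover have "finite (nbrs_with N y i k)" "finite (nbrs_with N y i (1 - k))"
    using assms(1) by (auto simp: nbrs_with_def)
  ultimately show ?thesis
    by (metis card_Un_disjoint)
qed

lemma prod_nbr_lik_eq_power: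
  assumes "finite (N i)" and "\<forall>j \<in> N i. y j \<in> {0, 1}" and "k \<in> {0, 1}"
  shows "(\<Prod>j\<in>N i. nbr_lik c k (y j))
    = c k ^ card (nbrs_with N y i k) * (1 - c k) ^ card (nbrs_with N y i (1 - k))"
proof -
  have "(\<Prod>j\<in>N i. nbr_lik c k (y j))
      = (\<Prod>j\<in>N i \<inter> {j. y j = k}. c k) * (\<Prod>j\<in>N i \<inter> - {j. y j = k}. 1 - c k)"
    unfolding nbr_lik_def using assms(1) by (rule prod.If_cases)
  moreover have "N i \<inter> {j. y j = k} = nbrs_with N y i k"
    by (auto simp: nbrs_with_def)
  moreover have "N i \<inter> - {j. y j = k} = nbrs_with N y i (1 - k)"
    using assms(2,3) by (auto simp: nbrs_with_def)
  ultimately show ?thesis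
    by simp
qed

lemma posterior_balanced_eq:
  assumes "p 0 = p 1" and "p 0 \<noteq> 0"
    and "finite (N i)" and "\<forall>j \<in> N i. y j \<in> {0, 1}" and "k \<in> {0, 1}"
  defines "a \<equiv> card (nbrs_with N y i k)" and "b \<equiv> card (nbrs_with N y i (1 - k))"
  shows "posterior p c N y i k
    = c k ^ a * (1 - c k) ^ b / (c k ^ a * (1 - c k) ^ b + (1 - c (1 - k)) ^ a * c (1 - k) ^ b)"
proof -
  have k': "1 - k \<in> {0, 1}" "1 - (1 - k) = k"
    using assms(5) by auto
  have sum_01: "(\<Sum>l\<in>{0, 1}. f l) = f k + f (1 - k)" for f :: "nat \<Rightarrow> real"
    using assms(5) by auto
  have prior: "p k = p 0" "p (1 - k) = p 0"
    using assms(1,5) by auto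
  show ?thesis
    unfolding posterior_def sum_01 prior
      prod_nbr_lik_eq_power[where N = N and i = i, OF assms(3,4,5)]
      prod_nbr_lik_eq_power[where N = N and i = i, OF assms(3,4) k'(1)] k'(2)
    using assms(2) by (simp add: a_def b_def mult.commute flip: distrib_left)
qed

lemma share_strict_mono_exponent:
  fixes \<alpha> \<beta> \<gamma> \<delta> :: real
  assumes "0 < \<alpha>" "0 < \<gamma>" "0 < \<delta>" "\<delta> < \<beta>" and "b < b'"
  shows "\<alpha> * \<beta> ^ b / (\<alpha> * \<beta> ^ b + \<gamma> * \<delta> ^ b) < \<alpha> * \<beta> ^ b' / (\<alpha> * \<beta> ^ b' + \<gamma> * \<delta> ^ b')"
proof -
  obtain d where d: "b' = b + d" "0 < d"
    using assms(5) less_imp_add_positive by blast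
  have "\<delta> ^ d < \<beta> ^ d"
    using assms(3,4) d(2) by (simp add: power_strict_mono)
  then have "\<alpha> * \<beta> ^ b * (\<gamma> * \<delta> ^ b * \<delta> ^ d) < \<alpha> * \<beta> ^ b * (\<gamma> * \<delta> ^ b * \<beta> ^ d)"
    using assms by simp
  then have "\<alpha> * \<beta> ^ b * (\<alpha> * \<beta> ^ b' + \<gamma> * \<delta> ^ b') < \<alpha> * \<beta> ^ b' * (\<alpha> * \<beta> ^ b + \<gamma> * \<delta> ^ b)"
    by (simp add: d power_add algebra_simps)
  moreover have "0 < \<alpha> * \<beta> ^ b + \<gamma> * \<delta> ^ b" "0 < \<alpha> * \<beta> ^ b' + \<gamma> * \<delta> ^ b'"
    using assms by (auto intro: add_pos_pos)
  ultimately show ?thesis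
    by (simp add: divide_simps)
qed

theorem mainTheorem4:
  fixes p c :: "nat \<Rightarrow> real" and N :: "'v \<Rightarrow> 'v set" and y :: "'v \<Rightarrow> nat"
    and k :: nat and n m :: 'v
  assumes k: "k \<in> {0, 1}"
    and c0: "0 < c 0" "c 0 < 1" and c1: "0 < c 1" "c 1 < 1"
    and prior: "p 0 = 1/2" "p 1 = 1/2"
    and hetero: "c k < 1 - c (1 - k)"
    and ck: "0 < c k" "c k < 1/2"
    and fin: "finite (N n)" "finite (N m)"
    and labels: "\<forall>j \<in> N n \<union> N m. y j \<in> {0, 1}"
    and deg: "card (N n) > card (N m)"
    and same_k: "card (nbrs_with N y n k) = card (nbrs_with N y m k)"
  shows "posterior p c N y n k > posterior p c N y m k"
proof -
  have balanced: "p 0 = p 1" "p 0 \<noteq> 0"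
    using prior by simp_all
  have labels_n: "\<forall>j \<in> N n. y j \<in> {0, 1}" and labels_m: "\<forall>j \<in> N m. y j \<in> {0, 1}"
    using labels by auto
  have "card (nbrs_with N y m (1 - k)) < card (nbrs_with N y n (1 - k))"
    using card_nbrs_with_add_complement[where N = N and i = n, OF fin(1) labels_n k]
      card_nbrs_with_add_complement[where N = N and i = m, OF fin(2) labels_m k] same_k deg
    by linarith
  moreover have "0 < c (1 - k)" "c (1 - k) < 1"
    using k c0 c1 by auto
  ultimately show ?thesis
    unfolding posterior_balanced_eq[where N = N and i = n, OF balanced fin(1) labels_n k]
      posterior_balanced_eq[where N = N and i = m, OF balanced fin(2) labels_m k] same_k
    using ck hetero by (intro share_strict_mono_exponent) auto
qed

end
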